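(* Let $q$ be an odd prime power, $d\ge 2$, $\gamma\in\mathbb{F}_q^*$ a non-square, and let $W\subset \{v\in\mathbb{F}_q^d:\|v\|\in\{1,\gamma\}\}$ contain exactly one element of each pair $\{v,-v\}$. Let $E\subset\mathbb{F}_q^d$ and let $F\subset W\times\mathbb{F}_q$, identified with the set of non-degenerate hyperplanes $\{H_{v,t}:(v,t)\in F\}$ (each non-degenerate hyperplane has exactly one such representation), and write $F(v,t)$ for the indicator function of $F$. Then $$|\Delta(E,F)| \ge \frac{|E|^2|F|^2}{2q^{-1}|E|^2|F|^2 + 2q^{d-1}|E||F|\cdot \max_{v\in W}\sum_{t\in\mathbb{F}_q}F(v,t)}.$$ In particular, if $|E||F|>q^{d+1}$, then $|\Delta(E,F)| > q/4$, so $|\Delta(E,F)|\gg q$.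
   Context: $\mathbb{F}_q$ is the field with $q$ elements; $x\cdot y=\sum_i x_iy_i$, $\|x\|=x_1^2+\dots+x_d^2$. $H_{v,t}=\{y\in\mathbb{F}_q^d: y\cdot v=t\}$; such a hyperplane is non-degenerate if $\|v\|\ne 0$. $O_d(\mathbb{F}_q)$ is the group of linear maps $\theta$ of $\mathbb{F}_q^d$ with $\|\theta y\|=\|y\|$ for all $y$. Pairs $(x,h)$ and $(x',h')$ (point, hyperplane) are equivalent if there is $\theta\in O_d(\mathbb{F}_q)$ with $\{\theta(y-x)+x': y\in h\}=h'$. $\Delta(E,F)$ is the set of equivalence classes of pairs $(x,H_{v,t})$ with $x\in E$, $(v,t)\in F$. *)

theory Defs
  imports "HOL-Analysis.Analysis"
begin

text \<open>Vectors in F_q^d are modelled as 'a ^ 'n with 'a a finite field and d = CARD('n).\<close>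

definition fdot :: "'a::comm_ring_1 ^ 'n \<Rightarrow> 'a ^ 'n \<Rightarrow> 'a" where
  "fdot x y = (\<Sum>i\<in>UNIV. x $ i * y $ i)"

definition fnorm :: "'a::comm_ring_1 ^ 'n \<Rightarrow> 'a" where
  "fnorm x = (\<Sum>i\<in>UNIV. x $ i * x $ i)"

definition hyp :: "'a::comm_ring_1 ^ 'n \<Rightarrow> 'a \<Rightarrow> ('a ^ 'n) set" where
  "hyp v t = {y. fdot y v = t}"

definition orth_group :: "('a::comm_ring_1 ^ 'n ^ 'n) set" where
  "orth_group = {M. \<forall>y. fnorm (M *v y) = fnorm y}"

definition pair_equiv :: "(('a::comm_ring_1 ^ 'n) \<times> ('a ^ 'n) set) rel" where
  "pair_equiv = {((x, h), (x', h')).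
      \<exists>M \<in> (orth_group :: ('a ^ 'n ^ 'n) set). (\<lambda>y. M *v (y - x) + x') ` h = h'}"

definition Delta :: "('a::comm_ring_1 ^ 'n) set \<Rightarrow> (('a ^ 'n) \<times> 'a) set
                     \<Rightarrow> (('a ^ 'n) \<times> ('a ^ 'n) set) set set" where
  "Delta E F = {(x, hyp v t) | x v t. x \<in> E \<and> (v, t) \<in> F} // pair_equiv"

end

theory Submission
  imports Defs
begin

(*
  For a pair (x, H_{v,t}) with |v|^2 in {1, gamma}, the square of the offset t - x.v is an invariant
  of the equivalence: an orthogonal map carrying one pair to another sends the normal v to mu v'
  with mu^2 |v|^2 = |v'|^2, and as gamma is a non-square this forces mu^2 = 1. Cauchy-Schwarz over
  the classes then gives |E|^2 |F|^2 <= |Delta(E,F)| * 2 sum_s nu(s)^2, where nu(s) counts the pairs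
  with offset s. By Cauchy-Schwarz over F, the deviation of nu from its mean |E||F|/q is bounded by
  the variances of the level counts of the linear forms x |-> x.v, v in W. These variances are
  invariant under scaling v, the dilates c v (c <> 0, v in W) are pairwise distinct, and summed
  over all of F_q^d the variances equal (q - 1) q^(d-1) |E|.
*)

section \<open>Dot product and the orthogonal group\<close>

lemma fdot_commute: "fdot x y = fdot y x"
  unfolding fdot_def by (simp add: mult.commute)

lemma fdot_add_left: "fdot (x + y) v = fdot x v + fdot y v"
  unfolding fdot_def by (simp add: distrib_right sum.distrib)

lemma fdot_add_right: "fdot x (v + w) = fdot x v + fdot x w"
  unfolding fdot_def by (simp add: distrib_left sum.distrib)

lemma fdot_diff_left: "fdot (x - y) v = fdot x v - fdot y v"
  unfolding fdot_def by (simp add: left_diff_distrib sum_subtractf)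

lemma fdot_diff_right: "fdot x (v - w) = fdot x v - fdot x w"
  unfolding fdot_def by (simp add: right_diff_distrib sum_subtractf)

lemma fdot_scale_left: "fdot (c *s x) v = c * fdot x v"
  unfolding fdot_def by (simp add: sum_distrib_left mult.assoc)

lemma fdot_scale_right: "fdot x (c *s v) = c * fdot x v"
  unfolding fdot_def by (simp add: sum_distrib_left algebra_simps)

lemma fdot_axis_left: "fdot (axis i 1) w = w $ i"
proof -
  have "axis i 1 $ j * w $ j = (if j = i then w $ j else 0)" for j
    by (simp add: axis_def)
  thus ?thesis unfolding fdot_def by simp
qed

lemma fdot_matrix_left: "fdot (M *v x) y = fdot x (y v* M)"
proof -
  have "fdot (M *v x) y = (\<Sum>i\<in>UNIV. \<Sum>j\<in>UNIV. M$i$j * x$j * y$i)"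
    unfolding fdot_def matrix_vector_mult_def by (simp add: sum_distrib_right)
  also have "\<dots> = (\<Sum>j\<in>UNIV. \<Sum>i\<in>UNIV. M$i$j * x$j * y$i)"
    by (rule sum.swap)
  also have "\<dots> = fdot x (y v* M)"
    unfolding fdot_def vector_matrix_mult_def by (simp add: sum_distrib_left mult_ac)
  finally show ?thesis .
qed

lemma fnorm_fdot: "fnorm x = fdot x x"
  unfolding fnorm_def fdot_def ..

lemma fnorm_add: "fnorm (x + y) = fnorm x + 2 * fdot x y + fnorm y"
  by (simp add: fnorm_fdot fdot_add_left fdot_add_right fdot_commute[of y x] algebra_simps)

lemma fnorm_scale: "fnorm (c *s x) = c * c * fnorm x"
  by (simp add: fnorm_fdot fdot_scale_left fdot_scale_right)

lemma two_neq_zero_if_nonsquare: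
  fixes \<gamma> :: "'a::{finite,field}"
  assumes "\<not> (\<exists>x. x * x = \<gamma>)"
  shows "(2::'a) \<noteq> 0"
proof
  assume two: "(2::'a) = 0"
  have "inj (\<lambda>x::'a. x * x)"
  proof (rule injI)
    fix x y :: 'a
    assume "x * x = y * y"
    moreover have "(x - y) * (x - y) = x * x - y * y + 2 * (y * y - x * y)"
      by (simp add: algebra_simps mult_2)
    ultimately have "(x - y) * (x - y) = 0" using two by simp
    thus "x = y" by simp
  qed
  hence "surj (\<lambda>x::'a. x * x)" by (simp add: finite_UNIV_inj_surj)
  then obtain x where "\<gamma> = x * x" by (meson surjD)
  with assms show False by blast
qed

lemma orth_group_fdot:
  assumes "(2::'a::field) \<noteq> 0" and "M \<in> (orth_group :: ('a^'n^'n) set)"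
  shows "fdot (M *v x) (M *v y) = fdot x y"
proof -
  have N: "fnorm (M *v z) = fnorm z" for z using assms(2) by (simp add: orth_group_def)
  have "fnorm (M *v (x + y)) = fnorm (x + y)" by (rule N)
  hence "2 * fdot (M *v x) (M *v y) = 2 * fdot x y"
    by (simp add: matrix_vector_right_distrib fnorm_add N)
  thus ?thesis using assms(1) by simp
qed

lemma orth_group_transpose_mult:
  assumes "(2::'a::field) \<noteq> 0" and "M \<in> (orth_group :: ('a^'n^'n) set)"
  shows "transpose M *v (M *v x) = x"
proof -
  have "(transpose M *v (M *v x)) $ i = x $ i" for i
    using orth_group_fdot[OF assms, of "axis i 1" x]
    by (simp add: fdot_matrix_left fdot_axis_left)
  thus ?thesis by (simp add: vec_eq_iff)
qed

lemma orth_group_transpose: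
  assumes "(2::'a::{finite,field}) \<noteq> 0" and M: "M \<in> (orth_group :: ('a^'n::finite^'n) set)"
  shows "transpose M \<in> orth_group"
  unfolding orth_group_def
proof (intro CollectI allI)
  fix y :: "'a^'n"
  have "inj ((*v) M)"
    by (rule inj_on_inverseI[where g="(*v) (transpose M)"]) (rule orth_group_transpose_mult[OF assms])
  hence "surj ((*v) M)" by (simp add: finite_UNIV_inj_surj)
  then obtain x where y: "y = M *v x" by blast
  hence "transpose M *v y = x" using orth_group_transpose_mult[OF assms] by blast
  thus "fnorm (transpose M *v y) = fnorm y" using M y by (simp add: orth_group_def)
qed

section \<open>Hyperplanes\<close>

lemma hyp_subset_imp_proportional:
  fixes v u :: "'a::field ^ 'n::finite"
  assumes v: "v \<noteq> 0" and sub: "hyp v s \<subseteq> hyp u s'"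
  shows "\<exists>\<mu>. u = \<mu> *s v \<and> s' = \<mu> * s"
proof -
  have H: "fdot z u = s'" if "fdot z v = s" for z
    using sub that by (auto simp: hyp_def)
  obtain i where vi: "v $ i \<noteq> 0" using v by (auto simp: vec_eq_iff)
  define z0 where "z0 = (s / v$i) *s axis i 1"
  have z0u: "fdot z0 u = s'"
    using vi by (intro H) (simp add: z0_def fdot_scale_left fdot_axis_left)
  define \<mu> where "\<mu> = u$i / v$i"
  have "u $ j = \<mu> * v $ j" for j
  proof -
    define w where "w = (v$j) *s axis i 1 - (v$i) *s axis j 1"
    have "fdot w v = 0"
      by (simp add: w_def fdot_diff_left fdot_scale_left fdot_axis_left mult.commute)
    hence "fdot (z0 + w) u = s'" by (intro H) (simp add: fdot_add_left z0_def fdot_scale_left fdot_axis_left vi)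
    hence "fdot w u = 0" using z0u by (simp add: fdot_add_left)
    hence "v$j * u$i = v$i * u$j" by (simp add: w_def fdot_diff_left fdot_scale_left fdot_axis_left)
    thus ?thesis using vi by (simp add: \<mu>_def field_simps)
  qed
  moreover have "s' = \<mu> * s"
    using z0u vi by (simp add: z0_def fdot_scale_left fdot_axis_left \<mu>_def field_simps)
  ultimately show ?thesis by (auto simp: vec_eq_iff)
qed

lemma power_card_eq_mult_power_pred: "(x::'a::monoid_mult) ^ CARD('n::finite) = x * x ^ (CARD('n) - 1)"
proof -
  have "CARD('n) = Suc (CARD('n) - 1)" by simp
  thus ?thesis by (metis power_Suc)
qed

lemma card_hyp:
  fixes v :: "'a::{finite,field} ^ 'n::finite"
  assumes "v \<noteq> 0"
  shows "card (hyp v t) = CARD('a) ^ (CARD('n) - 1)"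
proof -
  obtain i where vi: "v $ i \<noteq> 0" using assms by (auto simp: vec_eq_iff)
  have shift: "card (hyp v t) = card (hyp v 0)" for t
  proof -
    define e where "e = (t / v$i) *s axis i 1"
    have e: "fdot e v = t" using vi by (simp add: e_def fdot_scale_left fdot_axis_left)
    have "hyp v t = (\<lambda>y. y + e) ` hyp v 0"
    proof (intro equalityI subsetI)
      fix y assume "y \<in> hyp v t"
      hence "y - e \<in> hyp v 0" using e by (simp add: hyp_def fdot_diff_left)
      thus "y \<in> (\<lambda>y. y + e) ` hyp v 0" by (rule rev_image_eqI) simp
    qed (use e in \<open>auto simp: hyp_def fdot_add_left\<close>)
    thus ?thesis by (simp add: card_image)
  qed
  moreover have "CARD('a ^ 'n) = (\<Sum>t\<in>UNIV. card (hyp v t))"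
  proof -
    have "(UNIV :: ('a^'n) set) = (\<Union>t. hyp v t)" by (auto simp: hyp_def)
    hence "CARD('a ^ 'n) = card (\<Union>t. hyp v t)" by simp
    also have "\<dots> = (\<Sum>t\<in>UNIV. card (hyp v t))"
      by (rule card_UN_disjoint) (auto simp: hyp_def)
    finally show ?thesis .
  qed
  moreover have "(\<Sum>t\<in>UNIV. card (hyp v t)) = CARD('a) * card (hyp v 0)"
    by (subst shift) simp
  ultimately have "CARD('a) * CARD('a) ^ (CARD('n) - 1) = CARD('a) * card (hyp v 0)"
    by (simp add: power_card_eq_mult_power_pred)
  thus ?thesis by (simp add: shift[of t])
qed

lemma square_eq_one_if_norm_classes:
  fixes \<gamma> :: "'a::field"
  assumes "\<gamma> \<noteq> 0" "\<not> (\<exists>x. x * x = \<gamma>)"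
    and "n = 1 \<or> n = \<gamma>" "n' = 1 \<or> n' = \<gamma>" and "n' = m * m * n"
  shows "m * m = 1"
proof -
  consider "n = n'" | "n = 1" "n' = \<gamma>" | "n = \<gamma>" "n' = 1"
    using assms(3,4) by auto
  thus ?thesis
  proof cases
    case 1
    thus ?thesis using assms by auto
  next
    case 2
    thus ?thesis using assms by auto
  next
    case 3
    hence e: "m * m * \<gamma> = 1" using assms(5) by simp
    hence "m \<noteq> 0" by auto
    have "(1/m) * (1/m) = (1/m) * (1/m) * (m * m * \<gamma>)" using e by simp
    also have "\<dots> = \<gamma>" using \<open>m \<noteq> 0\<close> by (simp add: field_simps)
    finally have "(1/m) * (1/m) = \<gamma>" .
    thus ?thesis using assms(2) by blast
  qed
qed

lemma pair_equiv_offset_sq_eq: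
  fixes x x' v v' :: "'a::{finite,field} ^ 'n::finite"
  assumes \<gamma>: "\<gamma> \<noteq> 0" "\<not> (\<exists>x. x * x = \<gamma>)"
    and v: "fnorm v = 1 \<or> fnorm v = \<gamma>" and v': "fnorm v' = 1 \<or> fnorm v' = \<gamma>"
    and equiv: "((x, hyp v t), (x', hyp v' t')) \<in> pair_equiv"
  shows "(t - fdot x v)^2 = (t' - fdot x' v')^2"
proof -
  have two: "(2::'a) \<noteq> 0" by (rule two_neq_zero_if_nonsquare[OF \<gamma>(2)])
  obtain M where M: "M \<in> (orth_group :: ('a^'n^'n) set)"
    and img: "(\<lambda>y. M *v (y - x) + x') ` hyp v t = hyp v' t'"
    using equiv unfolding pair_equiv_def by blast
  have "hyp v (t - fdot x v) \<subseteq> hyp (v' v* M) (t' - fdot x' v')"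
  proof
    fix z assume "z \<in> hyp v (t - fdot x v)"
    hence "z + x \<in> hyp v t" by (simp add: hyp_def fdot_add_left)
    hence "M *v z + x' \<in> hyp v' t'" using img by force
    thus "z \<in> hyp (v' v* M) (t' - fdot x' v')"
      by (simp add: hyp_def fdot_add_left eq_diff_eq flip: fdot_matrix_left)
  qed
  moreover have "v \<noteq> 0" using v \<gamma>(1) by (auto simp: fnorm_def)
  ultimately obtain \<mu> where \<mu>: "v' v* M = \<mu> *s v" "t' - fdot x' v' = \<mu> * (t - fdot x v)"
    using hyp_subset_imp_proportional by blast
  have "fnorm v' = fnorm (v' v* M)"
    using orth_group_transpose[OF two M] by (simp add: orth_group_def)
  hence "fnorm v' = \<mu> * \<mu> * fnorm v" by (simp add: \<mu>(1) fnorm_scale)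
  hence "\<mu> * \<mu> = 1" using square_eq_one_if_norm_classes[OF \<gamma> v v'] by blast
  have "(t' - fdot x' v')^2 = (\<mu> * \<mu>) * (t - fdot x v)^2"
    by (simp add: \<mu>(2) power2_eq_square mult_ac)
  thus ?thesis using \<open>\<mu> * \<mu> = 1\<close> by simp
qed

definition pair_class :: "('a::comm_ring_1 ^ 'n) \<times> ('a ^ 'n) \<times> 'a \<Rightarrow> (('a ^ 'n) \<times> ('a ^ 'n) set) set" where
  "pair_class = (\<lambda>(x, v, t). pair_equiv `` {(x, hyp v t)})"

lemma Delta_eq_image_pair_class: "Delta E F = pair_class ` (E \<times> F)"
  unfolding Delta_def quotient_def pair_class_def by force

lemma pair_equiv_refl: "(p, p) \<in> pair_equiv"
proof -
  obtain x h where "p = (x, h)" by (cases p)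
  moreover have "mat 1 \<in> orth_group" by (simp add: orth_group_def)
  ultimately show ?thesis unfolding pair_equiv_def by force
qed

section \<open>Fibre counts\<close>

definition fiber_count :: "'b set \<Rightarrow> ('b \<Rightarrow> 'c) \<Rightarrow> 'c \<Rightarrow> real" where
  "fiber_count B f c = (\<Sum>b\<in>B. of_bool (f b = c))"

lemma sum_of_bool_delta:
  assumes "finite T" "a \<in> T"
  shows "(\<Sum>c\<in>T. of_bool (a = c) * h c) = (h a :: real)"
proof -
  have "(\<Sum>c\<in>T. of_bool (a = c) * h c) = (\<Sum>c\<in>T. if c = a then h c else 0)"
    by (intro sum.cong) auto
  thus ?thesis using assms by simp
qed

lemma sum_fiber_count:
  assumes "finite T" "f ` B \<subseteq> T"
  shows "(\<Sum>c\<in>T. fiber_count B f c) = real (card B)"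
proof -
  have "(\<Sum>c\<in>T. fiber_count B f c) = (\<Sum>b\<in>B. \<Sum>c\<in>T. of_bool (f b = c))"
    unfolding fiber_count_def by (rule sum.swap)
  also have "\<dots> = (\<Sum>b\<in>B. 1)"
    using assms sum_of_bool_delta[of T _ "\<lambda>_. 1"] by (intro sum.cong) auto
  finally show ?thesis by simp
qed

lemma sum_fiber_count_mult:
  assumes "finite T" "f ` B \<subseteq> T"
  shows "(\<Sum>c\<in>T. fiber_count B f c * fiber_count B g c)
           = (\<Sum>b\<in>B. \<Sum>b'\<in>B. of_bool (f b = g b'))"
proof -
  have "(\<Sum>c\<in>T. fiber_count B f c * fiber_count B g c)
          = (\<Sum>b\<in>B. \<Sum>b'\<in>B. \<Sum>c\<in>T. of_bool (f b = c) * of_bool (g b' = c))"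
    unfolding fiber_count_def sum_product by (subst sum.swap) (simp add: sum.swap[of _ T])
  also have "\<dots> = (\<Sum>b\<in>B. \<Sum>b'\<in>B. of_bool (f b = g b'))"
    using assms by (intro sum.cong refl) (simp add: sum_of_bool_delta image_subset_iff)
  finally show ?thesis .
qed

lemma card_sq_le_card_image_mult_collisions:
  assumes "finite B"
  shows "real (card B)^2 \<le> real (card (f ` B)) * (\<Sum>b\<in>B. \<Sum>b'\<in>B. of_bool (f b = f b'))"
proof -
  have "real (card B)^2 = (\<Sum>c\<in>f ` B. fiber_count B f c)^2"
    using assms by (simp add: sum_fiber_count)
  also have "\<dots> \<le> (\<Sum>c\<in>f ` B. (fiber_count B f c)^2) * real (card (f ` B))"
    by (rule sum_squared_le_sum_of_squares)
  also have "(\<Sum>c\<in>f ` B. (fiber_count B f c)^2) = (\<Sum>b\<in>B. \<Sum>b'\<in>B. of_bool (f b = f b'))"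
    using assms by (simp add: power2_eq_square sum_fiber_count_mult)
  finally show ?thesis by (simp add: mult.commute)
qed

lemma square_collisions_le:
  fixes f :: "'b \<Rightarrow> 'a::{finite,field}"
  shows "(\<Sum>b\<in>B. \<Sum>b'\<in>B. of_bool ((f b)^2 = (f b')^2)) \<le> 2 * (\<Sum>c\<in>UNIV. (fiber_count B f c)^2)"
proof -
  let ?N = "fiber_count B f"
  have "(\<Sum>b\<in>B. \<Sum>b'\<in>B. of_bool ((f b)^2 = (f b')^2) :: real)
          \<le> (\<Sum>b\<in>B. \<Sum>b'\<in>B. of_bool (f b = f b') + of_bool (f b = - f b'))"
  proof (intro sum_mono)
    fix b b'
    have "(f b)^2 = (f b')^2 \<longleftrightarrow> f b = f b' \<or> f b = - f b'"
      by (metis power2_eq_iff)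
    thus "of_bool ((f b)^2 = (f b')^2) \<le> (of_bool (f b = f b') + of_bool (f b = - f b') :: real)"
      by auto
  qed
  also have "\<dots> = (\<Sum>c\<in>UNIV. ?N c * ?N c) + (\<Sum>c\<in>UNIV. ?N c * fiber_count B (\<lambda>b. - f b) c)"
    by (simp add: sum_fiber_count_mult sum.distrib)
  also have "(\<Sum>c\<in>UNIV. ?N c * fiber_count B (\<lambda>b. - f b) c) = (\<Sum>c\<in>UNIV. ?N c * ?N (- c))"
    unfolding fiber_count_def by (simp add: minus_equation_iff eq_commute[of "- _"])
  also have "\<dots> \<le> (\<Sum>c\<in>UNIV. ((?N c)^2 + (?N (- c))^2) / 2)"
    by (intro sum_mono) (simp add: field_simps sum_squares_bound[unfolded mult.assoc])
  also have "\<dots> = (\<Sum>c\<in>UNIV. (?N c)^2)"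
  proof -
    have "(\<Sum>c\<in>UNIV. (?N (- c))^2) = (\<Sum>c\<in>UNIV. (?N c)^2)"
      by (rule sum.reindex_bij_witness[of _ uminus uminus]) auto
    thus ?thesis by (simp add: sum.distrib add_divide_distrib flip: sum_divide_distrib)
  qed
  finally show ?thesis by (simp add: power2_eq_square)
qed

lemma sum_power2_eq_mean_plus_deviation:
  fixes g :: "'b \<Rightarrow> real"
  assumes "finite T" "T \<noteq> {}"
  defines "m \<equiv> (\<Sum>t\<in>T. g t) / card T"
  shows "(\<Sum>t\<in>T. (g t)^2) = (\<Sum>t\<in>T. g t)^2 / card T + (\<Sum>t\<in>T. (g t - m)^2)"
proof -
  have n: "real (card T) > 0" using assms by (simp add: card_gt_0_iff)
  have "(\<Sum>t\<in>T. (g t - m)^2) = (\<Sum>t\<in>T. (g t)^2) - 2 * m * (\<Sum>t\<in>T. g t) + card T * m^2"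
    by (simp add: power2_diff sum.distrib sum_subtractf sum_distrib_left sum_distrib_right mult_ac)
  also have "\<dots> = (\<Sum>t\<in>T. (g t)^2) - (\<Sum>t\<in>T. g t)^2 / card T"
    using n by (simp add: m_def field_simps power2_eq_square)
  finally show ?thesis by simp
qed

section \<open>Level sets of linear forms\<close>

definition level_variance :: "('a::{finite,comm_ring_1} ^ 'n::finite) set \<Rightarrow> 'a ^ 'n \<Rightarrow> real" where
  "level_variance E w =
     (\<Sum>u\<in>UNIV. (fiber_count E (\<lambda>x. fdot x w) u - real (card E) / real CARD('a))^2)"

lemma level_variance_nonneg: "0 \<le> level_variance E w"
  by (simp add: level_variance_def sum_nonneg)

lemma level_variance_eq:
  fixes E :: "('a::{finite,comm_ring_1} ^ 'n::finite) set"
  shows "level_variance E w = (\<Sum>u\<in>UNIV. (fiber_count E (\<lambda>x. fdot x w) u)^2) - real (card E)^2 / real CARD('a)"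
  using sum_power2_eq_mean_plus_deviation[of "UNIV :: 'a set" "fiber_count E (\<lambda>x. fdot x w)"]
  by (simp add: level_variance_def sum_fiber_count)

lemma level_variance_scale:
  fixes E :: "('a::{finite,field} ^ 'n::finite) set"
  assumes "c \<noteq> 0"
  shows "level_variance E (c *s w) = level_variance E w"
proof -
  define h where "h u = (fiber_count E (\<lambda>x. fdot x w) u - real (card E) / real CARD('a))^2" for u
  have "fiber_count E (\<lambda>x. fdot x (c *s w)) u = fiber_count E (\<lambda>x. fdot x w) (u / c)" for u
    unfolding fiber_count_def fdot_scale_right using assms
    by (intro sum.cong refl) (auto simp: field_simps)
  hence "level_variance E (c *s w) = (\<Sum>u\<in>UNIV. h (u / c))"
    by (simp add: level_variance_def h_def)
  also have "\<dots> = (\<Sum>u\<in>UNIV. h u)"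
    by (rule sum.reindex_bij_witness[where i="\<lambda>u. u * c" and j="\<lambda>u. u / c"]) (use assms in auto)
  finally show ?thesis by (simp add: level_variance_def h_def)
qed

lemma card_fdot_eq_fdot:
  fixes x x' :: "'a::{finite,field} ^ 'n::finite"
  shows "card {w. fdot x w = fdot x' w}
           = (if x = x' then CARD('a) ^ CARD('n) else CARD('a) ^ (CARD('n) - 1))"
proof -
  have "{w. fdot x w = fdot x' w} = hyp (x - x') 0"
    by (auto simp: hyp_def fdot_diff_right fdot_commute[of x] fdot_commute[of x'])
  moreover have "hyp 0 0 = (UNIV :: ('a^'n) set)" by (simp add: hyp_def fdot_def)
  ultimately show ?thesis by (simp add: card_hyp)
qed

lemma sum_level_energy:
  fixes E :: "('a::{finite,field} ^ 'n::finite) set"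
  defines "q \<equiv> real CARD('a)" and "r \<equiv> real CARD('a) ^ (CARD('n) - 1)"
  shows "(\<Sum>w\<in>UNIV. \<Sum>u\<in>UNIV. (fiber_count E (\<lambda>x. fdot x w) u)^2)
           = real (card E)^2 * r + (q * r - r) * real (card E)"
proof -
  have incidences: "(\<Sum>w\<in>UNIV. of_bool (fdot x w = fdot x' w)) = r + of_bool (x = x') * (q * r - r)"
    for x x' :: "'a^'n"
    using card_fdot_eq_fdot[of x x'] by (simp add: q_def r_def power_card_eq_mult_power_pred)
  have "(\<Sum>w\<in>UNIV. \<Sum>u\<in>UNIV. (fiber_count E (\<lambda>x. fdot x w) u)^2)
          = (\<Sum>w\<in>UNIV. \<Sum>x\<in>E. \<Sum>x'\<in>E. of_bool (fdot x w = fdot x' w))"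
    by (simp add: power2_eq_square sum_fiber_count_mult)
  also have "\<dots> = (\<Sum>x\<in>E. \<Sum>x'\<in>E. \<Sum>w\<in>UNIV. of_bool (fdot x w = fdot x' w))"
    by (subst sum.swap, rule sum.cong[OF refl], rule sum.swap)
  also have "\<dots> = (\<Sum>x\<in>E. \<Sum>x'\<in>E. r + of_bool (x = x') * (q * r - r))"
    by (simp only: incidences)
  also have "\<dots> = (\<Sum>x\<in>E. real (card E) * r + (q * r - r))"
    by (intro sum.cong refl) (simp add: sum.distrib sum_of_bool_delta del: sum_of_bool_mult_eq)
  also have "\<dots> = real (card E)^2 * r + (q * r - r) * real (card E)"
    by (simp add: power2_eq_square algebra_simps)
  finally show ?thesis .
qed

lemma sum_level_variance:
  fixes E :: "('a::{finite,field} ^ 'n::finite) set"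
  shows "(\<Sum>w\<in>UNIV. level_variance E w) = (real CARD('a) - 1) * real CARD('a) ^ (CARD('n) - 1) * real (card E)"
proof -
  define q where "q = real CARD('a)"
  define r where "r = real CARD('a) ^ (CARD('n) - 1)"
  have "(\<Sum>w\<in>UNIV. level_variance E w)
          = (\<Sum>w\<in>UNIV. \<Sum>u\<in>UNIV. (fiber_count E (\<lambda>x. fdot x w) u)^2) - q * r * (real (card E)^2 / q)"
    by (simp add: level_variance_eq sum_subtractf q_def r_def power_card_eq_mult_power_pred)
  also have "\<dots> = (q - 1) * r * real (card E)"
    unfolding sum_level_energy by (simp add: q_def r_def field_simps power2_eq_square)
  finally show ?thesis by (simp add: q_def r_def)
qed


section \<open>The offset energy\<close>

definition offset :: "('a::comm_ring_1 ^ 'n) \<times> ('a ^ 'n) \<times> 'a \<Rightarrow> 'a" where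
  "offset = (\<lambda>(x, v, t). t - fdot x v)"

lemma fiber_count_offset:
  "fiber_count (E \<times> F) offset s = (\<Sum>(v, t)\<in>F. fiber_count E (\<lambda>x. fdot x v) (t - s))"
proof -
  have "fiber_count (E \<times> F) offset s = (\<Sum>x\<in>E. \<Sum>p\<in>F. of_bool (offset (x, p) = s))"
    unfolding fiber_count_def by (simp add: sum.cartesian_product)
  also have "\<dots> = (\<Sum>p\<in>F. \<Sum>x\<in>E. of_bool (offset (x, p) = s))"
    by (rule sum.swap)
  also have "\<dots> = (\<Sum>(v, t)\<in>F. fiber_count E (\<lambda>x. fdot x v) (t - s))"
    unfolding fiber_count_def offset_def split_def
    by (intro sum.cong refl arg_cong[where f=of_bool]) auto
  finally show ?thesis .
qed

lemma offset_deviation_le: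
  fixes E :: "('a::{finite,field} ^ 'n::finite) set"
  shows "(\<Sum>s\<in>UNIV. (fiber_count (E \<times> F) offset s - real (card E) * real (card F) / real CARD('a))^2)
           \<le> real (card F) * (\<Sum>(v, t)\<in>F. level_variance E v)"
proof -
  define \<delta> where "\<delta> p s = fiber_count E (\<lambda>x. fdot x (fst p)) (snd p - s) - real (card E) / real CARD('a)"
    for p :: "('a^'n) \<times> 'a" and s
  have level: "(\<Sum>s\<in>UNIV. (\<delta> p s)^2) = level_variance E (fst p)" for p
    unfolding \<delta>_def level_variance_def
    by (rule sum.reindex_bij_witness[where i="\<lambda>s. snd p - s" and j="\<lambda>s. snd p - s"]) auto
  have "fiber_count (E \<times> F) offset s - real (card E) * real (card F) / real CARD('a) = (\<Sum>p\<in>F. \<delta> p s)" for s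
    by (simp add: \<delta>_def fiber_count_offset sum_subtractf split_def)
  hence "(\<Sum>s\<in>UNIV. (fiber_count (E \<times> F) offset s - real (card E) * real (card F) / real CARD('a))^2)
           = (\<Sum>s\<in>UNIV. (\<Sum>p\<in>F. \<delta> p s)^2)" by simp
  also have "\<dots> \<le> (\<Sum>s\<in>UNIV. (\<Sum>p\<in>F. (\<delta> p s)^2) * real (card F))"
    by (intro sum_mono sum_squared_le_sum_of_squares)
  also have "\<dots> = real (card F) * (\<Sum>p\<in>F. \<Sum>s\<in>UNIV. (\<delta> p s)^2)"
    by (simp add: sum_distrib_left mult.commute sum.swap[of _ UNIV F])
  finally show ?thesis by (simp add: level split_def)
qed

locale direction_representatives =
  fixes W :: "('a::{finite,field} ^ 'n::finite) set" and \<gamma> :: 'a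
  assumes gamma_nonzero: "\<gamma> \<noteq> 0"
    and gamma_nonsquare: "\<not> (\<exists>x. x * x = \<gamma>)"
    and W_norms: "W \<subseteq> {v. fnorm v = 1 \<or> fnorm v = \<gamma>}"
    and W_pairs: "\<And>v. fnorm v = 1 \<or> fnorm v = \<gamma> \<Longrightarrow> (v \<in> W \<longleftrightarrow> - v \<notin> W)"
begin

lemma scale_inj_on: "inj_on (\<lambda>(v, c). c *s v) (W \<times> - {0})"
proof (rule inj_onI)
  fix p p' assume p: "p \<in> W \<times> - {0}" and p': "p' \<in> W \<times> - {0}"
    and eq: "(\<lambda>(v, c). c *s v) p = (\<lambda>(v, c). c *s v) p'"
  obtain v c v' c' where pv: "p = (v, c)" and pv': "p' = (v', c')" by (cases p, cases p')
  have v: "v \<in> W" "c \<noteq> 0" and v': "v' \<in> W" "c' \<noteq> 0" using p p' by (auto simp: pv pv')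
  have nv: "fnorm v = 1 \<or> fnorm v = \<gamma>" and nv': "fnorm v' = 1 \<or> fnorm v' = \<gamma>"
    using W_norms v(1) v'(1) by auto
  define r where "r = c / c'"
  have vr: "v' = r *s v"
  proof -
    have "v' = (1 / c') *s (c' *s v')" using v'(2) by (simp add: vector_smult_assoc)
    also have "\<dots> = (1 / c') *s (c *s v)" using eq by (simp add: pv pv')
    also have "\<dots> = r *s v" by (simp add: vector_smult_assoc r_def)
    finally show ?thesis .
  qed
  have "fnorm v' = r * r * fnorm v" by (simp add: vr fnorm_scale)
  hence "r * r = 1" by (rule square_eq_one_if_norm_classes[OF gamma_nonzero gamma_nonsquare nv nv'])
  hence "r = 1 \<or> r = -1"
    using square_eq_1_iff[of r] by (simp add: power2_eq_square)
  moreover have "r \<noteq> -1"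
  proof
    assume "r = -1"
    hence "v' = - v" using vr by (simp add: vector_sneg_minus1[symmetric])
    moreover have "- v \<notin> W" using W_pairs[OF nv] v(1) by blast
    ultimately show False using v'(1) by simp
  qed
  ultimately have "r = 1" by simp
  hence "c = c'" using v'(2) by (simp add: r_def)
  moreover have "v' = v" using vr \<open>r = 1\<close> by simp
  ultimately show "p = p'" by (simp add: pv pv')
qed

lemma sum_level_variance_le:
  "(\<Sum>v\<in>W. level_variance E v) \<le> real CARD('a) ^ (CARD('n) - 1) * real (card E)"
proof -
  let ?q = "real CARD('a)"
  have "(?q - 1) * (\<Sum>v\<in>W. level_variance E v) = (\<Sum>v\<in>W. \<Sum>c\<in>- {0}. level_variance E (c *s v))"
    by (simp add: level_variance_scale sum_distrib_right Compl_eq_Diff_UNIV card_Diff_singleton mult.commute of_nat_diff)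
  also have "\<dots> = (\<Sum>w\<in>(\<lambda>(v, c). c *s v) ` (W \<times> - {0}). level_variance E w)"
    by (subst sum.reindex[OF scale_inj_on]) (simp add: sum.cartesian_product split_def)
  also have "\<dots> \<le> (\<Sum>w\<in>UNIV. level_variance E w)"
    by (rule sum_mono2) (auto simp: level_variance_nonneg)
  also have "\<dots> = (?q - 1) * (real CARD('a) ^ (CARD('n) - 1) * real (card E))"
    by (simp add: sum_level_variance)
  finally have "(?q - 1) * (\<Sum>v\<in>W. level_variance E v)
                  \<le> (?q - 1) * (real CARD('a) ^ (CARD('n) - 1) * real (card E))" .
  moreover have "card {0::'a, 1} \<le> CARD('a)" by (rule card_mono) auto
  hence "?q - 1 > 0" by simp
  ultimately show ?thesis by (rule mult_left_le_imp_le)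
qed


lemma sum_pairs_level_variance_le:
  fixes F :: "(('a ^ 'n) \<times> 'a) set"
  assumes F: "F \<subseteq> W \<times> UNIV" and m: "\<And>v. v \<in> W \<Longrightarrow> card {t. (v, t) \<in> F} \<le> m"
  shows "(\<Sum>(v, t)\<in>F. level_variance E v) \<le> real m * (real CARD('a) ^ (CARD('n) - 1) * real (card E))"
proof -
  have "(\<Sum>(v, t)\<in>F. level_variance E v) = (\<Sum>v\<in>W. \<Sum>p | p \<in> F \<and> fst p = v. level_variance E (fst p))"
    unfolding split_def by (rule sum.group[symmetric]) (use F in auto)
  also have "\<dots> = (\<Sum>v\<in>W. real (card {t. (v, t) \<in> F}) * level_variance E v)"
  proof (rule sum.cong[OF refl])
    fix v
    have "{p. p \<in> F \<and> fst p = v} = Pair v ` {t. (v, t) \<in> F}" by force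
    thus "(\<Sum>p | p \<in> F \<and> fst p = v. level_variance E (fst p))
            = real (card {t. (v, t) \<in> F}) * level_variance E v"
      by (simp add: sum.reindex inj_on_def)
  qed
  also have "\<dots> \<le> (\<Sum>v\<in>W. real m * level_variance E v)"
    using m by (intro sum_mono mult_right_mono level_variance_nonneg) auto
  also have "\<dots> \<le> real m * (real CARD('a) ^ (CARD('n) - 1) * real (card E))"
    unfolding sum_distrib_left[symmetric]
    using sum_level_variance_le
    by (intro mult_left_mono) auto
  finally show ?thesis .
qed

lemma offset_energy_le:
  assumes F: "F \<subseteq> W \<times> UNIV" and m: "\<And>v. v \<in> W \<Longrightarrow> card {t. (v, t) \<in> F} \<le> m"
  shows "(\<Sum>s\<in>UNIV. (fiber_count (E \<times> F) offset s)^2)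
           \<le> (real (card E) * real (card F))^2 / real CARD('a)
              + real CARD('a) ^ (CARD('n) - 1) * (real (card E) * real (card F)) * real m"
proof -
  have "(\<Sum>s\<in>UNIV. fiber_count (E \<times> F) offset s) = real (card E) * real (card F)"
    by (simp add: sum_fiber_count card_cartesian_product)
  hence "(\<Sum>s\<in>UNIV. (fiber_count (E \<times> F) offset s)^2)
          = (real (card E) * real (card F))^2 / real CARD('a)
            + (\<Sum>s\<in>UNIV. (fiber_count (E \<times> F) offset s - real (card E) * real (card F) / real CARD('a))^2)"
    using sum_power2_eq_mean_plus_deviation[of "UNIV :: 'a set" "fiber_count (E \<times> F) offset"] by simp
  also have "\<dots> \<le> (real (card E) * real (card F))^2 / real CARD('a)
                   + real (card F) * (real m * (real CARD('a) ^ (CARD('n) - 1) * real (card E)))"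
  proof -
    have "(\<Sum>s\<in>UNIV. (fiber_count (E \<times> F) offset s - real (card E) * real (card F) / real CARD('a))^2)
            \<le> real (card F) * (\<Sum>(v, t)\<in>F. level_variance E v)"
      by (rule offset_deviation_le)
    also have "\<dots> \<le> real (card F) * (real m * (real CARD('a) ^ (CARD('n) - 1) * real (card E)))"
      by (intro mult_left_mono sum_pairs_level_variance_le[OF F m]) simp_all
    finally show ?thesis by simp
  qed
  finally show ?thesis by (simp add: mult_ac)
qed

lemma offset_sq_eq_if_pair_class_eq:
  assumes "fst (snd b) \<in> W" "fst (snd b') \<in> W" and "pair_class b = pair_class b'"
  shows "(offset b)^2 = (offset b')^2"
proof -
  obtain x v t x' v' t' where b: "b = (x, v, t)" and b': "b' = (x', v', t')"
    by (cases b, cases b') auto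
  have "(x', hyp v' t') \<in> pair_class b'"
    using pair_equiv_refl by (simp add: b' pair_class_def)
  hence "(x', hyp v' t') \<in> pair_class b" using assms(3) by simp
  hence "((x, hyp v t), (x', hyp v' t')) \<in> pair_equiv" by (simp add: b pair_class_def)
  moreover have "fnorm v = 1 \<or> fnorm v = \<gamma>" "fnorm v' = 1 \<or> fnorm v' = \<gamma>"
    using assms(1,2) W_norms by (auto simp: b b')
  ultimately show ?thesis
    using pair_equiv_offset_sq_eq[OF gamma_nonzero gamma_nonsquare] by (simp add: b b' offset_def)
qed

lemma card_sq_le_card_Delta_mult_energy:
  assumes F: "F \<subseteq> W \<times> UNIV"
  shows "(real (card E) * real (card F))^2
           \<le> real (card (Delta E F)) * (2 * (\<Sum>s\<in>UNIV. (fiber_count (E \<times> F) offset s)^2))"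
proof -
  let ?B = "E \<times> F"
  have "(real (card E) * real (card F))^2
          \<le> real (card (Delta E F)) * (\<Sum>b\<in>?B. \<Sum>b'\<in>?B. of_bool (pair_class b = pair_class b'))"
    using card_sq_le_card_image_mult_collisions[of ?B pair_class]
    by (simp add: Delta_eq_image_pair_class card_cartesian_product)
  also have "\<dots> \<le> real (card (Delta E F)) * (\<Sum>b\<in>?B. \<Sum>b'\<in>?B. of_bool ((offset b)^2 = (offset b')^2))"
  proof (intro mult_left_mono sum_mono)
    fix b b' assume "b \<in> ?B" "b' \<in> ?B"
    hence "fst (snd b) \<in> W" "fst (snd b') \<in> W" using F by auto
    thus "of_bool (pair_class b = pair_class b') \<le> (of_bool ((offset b)^2 = (offset b')^2) :: real)"
      using offset_sq_eq_if_pair_class_eq[of b b'] by auto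
  qed simp
  also have "\<dots> \<le> real (card (Delta E F)) * (2 * (\<Sum>s\<in>UNIV. (fiber_count ?B offset s)^2))"
    by (intro mult_left_mono square_collisions_le) simp
  finally show ?thesis .
qed

lemma card_Delta_energy_bound:
  assumes F: "F \<subseteq> W \<times> UNIV" and m: "\<And>v. v \<in> W \<Longrightarrow> card {t. (v, t) \<in> F} \<le> m"
  shows "(real (card E) * real (card F))^2
           \<le> real (card (Delta E F)) * (2 * ((real (card E) * real (card F))^2 / real CARD('a)
                + real CARD('a) ^ (CARD('n) - 1) * (real (card E) * real (card F)) * real m))"
proof -
  have "(real (card E) * real (card F))^2
          \<le> real (card (Delta E F)) * (2 * (\<Sum>s\<in>UNIV. (fiber_count (E \<times> F) offset s)^2))"
    by (rule card_sq_le_card_Delta_mult_energy[OF F])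
  also have "\<dots> \<le> real (card (Delta E F)) * (2 * ((real (card E) * real (card F))^2 / real CARD('a)
                + real CARD('a) ^ (CARD('n) - 1) * (real (card E) * real (card F)) * real m))"
    using offset_energy_le[OF F m, of E] by (intro mult_left_mono) simp_all
  finally show ?thesis .
qed

end

lemma quarter_lt_energy_quotient:
  fixes q X m :: real
  assumes q: "0 < q" and m: "0 \<le> m" "m \<le> q" and X: "q ^ (k + 2) < X"
  shows "q / 4 < X^2 / (2 * (X^2 / q + q ^ k * X * m))"
proof -
  have X0: "0 < X" using X q by (meson less_trans zero_less_power)
  have "q ^ k * X * m \<le> q ^ k * X * q"
    using X0 q m by (intro mult_left_mono) auto
  also have "\<dots> < X^2 / q"
  proof -
    have "q ^ k * q * q < X" using X by (simp add: mult_ac)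
    thus ?thesis using q X0 by (simp add: field_simps power2_eq_square)
  qed
  finally have "2 * (X^2 / q + q ^ k * X * m) < 4 * (X^2 / q)" by simp
  moreover have "0 < 2 * (X^2 / q + q ^ k * X * m)"
    using q X0 m by (simp add: add_pos_nonneg)
  ultimately have "X^2 / (4 * (X^2 / q)) < X^2 / (2 * (X^2 / q + q ^ k * X * m))"
    using q X0 by (intro divide_strict_left_mono mult_pos_pos) auto
  moreover have "X^2 / (4 * (X^2 / q)) = q / 4" using q X0 by (simp add: field_simps)
  ultimately show ?thesis by linarith
qed

lemma energy_quotient_bounds:
  fixes q X m D :: real
  assumes q: "0 < q" and X: "0 \<le> X" and m: "0 \<le> m" and D: "0 \<le> D"
    and energy: "X^2 \<le> D * (2 * (X^2 / q + q ^ k * X * m))"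
  shows "X^2 / (2 * (X^2 / q + q ^ k * X * m)) \<le> D"
    and "m \<le> q \<Longrightarrow> q ^ (k + 2) < X \<Longrightarrow> q / 4 < D"
proof -
  show lower: "X^2 / (2 * (X^2 / q + q ^ k * X * m)) \<le> D"
  proof (cases "2 * (X^2 / q + q ^ k * X * m) = 0")
    case False
    moreover have "0 \<le> 2 * (X^2 / q + q ^ k * X * m)" using q X m by simp
    ultimately show ?thesis using energy by (simp add: pos_divide_le_eq mult.commute)
  qed (simp add: D)
  show "q / 4 < D" if "m \<le> q" "q ^ (k + 2) < X"
    using quarter_lt_energy_quotient[OF q m that] lower by linarith
qed

theorem mainTheorem2:
  fixes E :: "('a::{finite,field} ^ 'n::finite) set"
    and F :: "(('a ^ 'n) \<times> 'a) set"
    and W :: "('a ^ 'n) set"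
    and \<gamma> :: 'a
  assumes q_odd: "odd CARD('a)"
    and d_ge: "CARD('n) \<ge> 2"
    and gamma_ns: "\<gamma> \<noteq> 0" "\<not> (\<exists>x. x * x = \<gamma>)"
    and W_sub: "W \<subseteq> {v. fnorm v = 1 \<or> fnorm v = \<gamma>}"
    and W_pairs: "\<And>v. fnorm v = 1 \<or> fnorm v = \<gamma> \<Longrightarrow> (v \<in> W \<longleftrightarrow> - v \<notin> W)"
    and F_sub: "F \<subseteq> W \<times> UNIV"
  shows "real (card (Delta E F)) \<ge>
           (real (card E))^2 * (real (card F))^2 /
           (2 / real CARD('a) * (real (card E))^2 * (real (card F))^2
            + 2 * real CARD('a) ^ (CARD('n) - 1) * real (card E) * real (card F)
              * real (Max ((\<lambda>v. card {t. (v, t) \<in> F}) ` W)))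
       \<and> (real (card E) * real (card F) > real CARD('a) ^ (CARD('n) + 1)
           \<longrightarrow> real (card (Delta E F)) > real CARD('a) / 4)"
proof -
  interpret direction_representatives W \<gamma>
    using gamma_ns W_sub W_pairs by unfold_locales auto
  define m where "m = Max ((\<lambda>v. card {t. (v, t) \<in> F}) ` W)"
  have m: "card {t. (v, t) \<in> F} \<le> m" if "v \<in> W" for v
    unfolding m_def by (rule Max_ge) (use that in auto)
  note bounds = energy_quotient_bounds[of "real CARD('a)" "real (card E) * real (card F)" "real m"
                  "real (card (Delta E F))" "CARD('n) - 1", OF _ _ _ _ card_Delta_energy_bound[OF F_sub m]]
  have "F \<noteq> {}" if "real CARD('a) ^ (CARD('n) + 1) < real (card E) * real (card F)"
    using that by (auto simp: order.strict_iff_not)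
  hence "m \<le> CARD('a)" if "real CARD('a) ^ (CARD('n) + 1) < real (card E) * real (card F)"
    using that F_sub unfolding m_def by (subst Max_le_iff) (auto intro: card_mono)
  moreover have "CARD('n) - 1 + 2 = CARD('n) + 1" using d_ge by simp
  moreover have den: "2 / real CARD('a) * (real (card E))^2 * (real (card F))^2
                   + 2 * real CARD('a) ^ (CARD('n) - 1) * real (card E) * real (card F) * real m
                 = 2 * ((real (card E) * real (card F))^2 / real CARD('a)
                   + real CARD('a) ^ (CARD('n) - 1) * (real (card E) * real (card F)) * real m)"
    by (simp add: field_simps power_mult_distrib)
  ultimately show ?thesis
    using bounds unfolding m_def[symmetric] den by (simp add: power_mult_distrib)
qed

end
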